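(* Consider the multicast coalitional game with player set $\mathcal{N}$ and value function $$v(S)=\sum_{i\in S}U_i-\sum_{i\in S}\frac{\alpha_i}{R_S}-\frac{\beta+\gamma}{R_S},\qquad R_S=\min_{i\in S}R_i,$$ for nonempty $S\subseteq\mathcal{N}$. Let $\mathbf{P}=\{P_1,\dots,P_n\}$ be a partition of $\mathcal{N}$ into nonempty sets, with $R_{j,min}$, $R_{j,max}$ the minimum and maximum rates of users in $P_j$. Let $\alpha_{min}=\min_{i\in\mathcal{N}}\alpha_i$, $\alpha_{max}=\max_{i\in\mathcal{N}}\alpha_i$. If $$\frac{R_{j,max}}{R_{j,min}}\le\frac{2(\alpha_{min}+\beta+\gamma)}{\alpha_{max}|P_j|+\beta+\gamma}\quad\forall j\in\{1,\dots,n\},$$ then for every $\mathbf{P}$-compatible collection $\mathbf{S}=\{S_1,\dots,S_k\}$ (mutually disjoint nonempty sets with $\bigcup_{i=1}^kS_i\subseteq P_j$ for some $j$), $$v\Big(\bigcup_{i=1}^kS_i\Big)\ge\sum_{i=1}^kv(S_i).$$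
   Context: A transmitter multicasts a file of size $X>0$ bits to users $\mathcal{N}=\{1,\dots,N\}$. User $i$ has valuation $U_i\in\mathbb{R}$, downloads at rate $R_i>0$, and consumes receive power $P_{Rx,i}>0$; the transmitter transmits at power $P_{Tx}>0$. Costs per unit energy are $a>0$ at users and $b>0$ at the transmitter; bandwidth cost per second is $w>0$. Set $\alpha_i=aP_{Rx,i}X$, $\beta=bP_{Tx}X$, $\gamma=wX$. *)

theory Defs
  imports Complex_Main "HOL-Library.Disjoint_Sets"
begin

definition rate_of :: "('u \<Rightarrow> real) \<Rightarrow> 'u set \<Rightarrow> real" where
  "rate_of R S = Min (R ` S)"

text \<open>Value function of the multicast game:
  v(S) = sum U_i - sum alpha_i / R_S - (beta + gamma) / R_S,
  with alpha_i = a P_Rx,i X, beta = b P_Tx X, gamma = w X.\<close>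
definition mc_value ::
  "('u \<Rightarrow> real) \<Rightarrow> ('u \<Rightarrow> real) \<Rightarrow> ('u \<Rightarrow> real) \<Rightarrow> real \<Rightarrow> real \<Rightarrow> real \<Rightarrow> real \<Rightarrow> real
   \<Rightarrow> 'u set \<Rightarrow> real" where
  "mc_value U R PRx PTx X a b w S =
     (\<Sum>i\<in>S. U i) - (\<Sum>i\<in>S. a * PRx i * X) / rate_of R S
       - (b * PTx * X + w * X) / rate_of R S"

end

theory Submission
  imports Defs
begin

text \<open>Write \<open>v(S) = U(S) - C(S)\<close> with the cost \<open>C(S) = (\<alpha>(S) + \<beta> + \<gamma>) / R\<^sub>S\<close>. Utilities
  are additive, so superadditivity of \<open>v\<close> is subadditivity of \<open>C\<close>. For \<open>k \<ge> 2\<close> disjoint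
  coalitions inside one block \<open>P\<^sub>j\<close>, the union \<open>T\<close> has rate at least \<open>R\<^sub>j\<^sub>,\<^sub>m\<^sub>i\<^sub>n\<close>, while
  each \<open>S\<^sub>i\<close> has rate at most \<open>R\<^sub>j\<^sub>,\<^sub>m\<^sub>a\<^sub>x\<close>; so it suffices that
  \<open>R\<^sub>j\<^sub>,\<^sub>m\<^sub>a\<^sub>x (\<alpha>(T) + \<beta> + \<gamma>) \<le> R\<^sub>j\<^sub>,\<^sub>m\<^sub>i\<^sub>n (\<alpha>(T) + k (\<beta> + \<gamma>))\<close>. Since \<open>T\<close> has at least two
  members, \<open>2 \<alpha>\<^sub>m\<^sub>i\<^sub>n \<le> \<alpha>(T) \<le> \<alpha>\<^sub>m\<^sub>a\<^sub>x |P\<^sub>j|\<close>, and this is what the rate-spread hypothesis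
  provides.\<close>

definition multicast_cost :: "('u \<Rightarrow> real) \<Rightarrow> ('u \<Rightarrow> real) \<Rightarrow> real \<Rightarrow> 'u set \<Rightarrow> real" where
  "multicast_cost R \<alpha> c S = (sum \<alpha> S + c) / rate_of R S"

lemma mc_value_eq_sum_minus_cost:
  "mc_value U R PRx PTx X a b w S
     = sum U S - multicast_cost R (\<lambda>i. a * PRx i * X) (b * PTx * X + w * X) S"
  unfolding mc_value_def multicast_cost_def by (simp add: add_divide_distrib)

lemma rate_of_pos:
  assumes "finite S" "S \<noteq> {}" "\<And>i. i \<in> S \<Longrightarrow> R i > 0"
  shows "rate_of R S > 0"
  using assms unfolding rate_of_def by simp

lemma rate_of_antimono:
  assumes "finite T" "S \<noteq> {}" "S \<subseteq> T"
  shows "rate_of R T \<le> rate_of R S"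
  using assms unfolding rate_of_def by (intro Min_antimono) auto

lemma rate_of_le_Max:
  assumes "finite T" "S \<noteq> {}" "S \<subseteq> T"
  shows "rate_of R S \<le> Max (R ` T)"
proof -
  obtain x where x: "x \<in> S" using assms(2) by blast
  then have "rate_of R S \<le> R x"
    using finite_subset[OF assms(3,1)] unfolding rate_of_def by simp
  also have "R x \<le> Max (R ` T)" using x assms by auto
  finally show ?thesis .
qed

lemma card_le_card_Union_disjoint:
  assumes "disjoint \<S>" "\<And>S. S \<in> \<S> \<Longrightarrow> S \<noteq> {}" "\<And>S. S \<in> \<S> \<Longrightarrow> finite S"
  shows "card \<S> \<le> card (\<Union>\<S>)"
proof -
  have "card \<S> = (\<Sum>S\<in>\<S>. 1)" by simp
  also have "\<dots> \<le> sum card \<S>"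
    using assms(2,3) by (intro sum_mono) (simp add: Suc_leI card_gt_0_iff)
  also have "\<dots> = card (\<Union>\<S>)" using assms(1,3) by (simp add: card_Union_disjoint)
  finally show ?thesis .
qed

lemma multicast_cost_Union_le_of_rate_bounds:
  assumes disj: "disjoint \<S>"
    and fin_mem: "\<And>S. S \<in> \<S> \<Longrightarrow> finite S"
    and \<alpha>_nonneg: "\<And>i. i \<in> \<Union>\<S> \<Longrightarrow> \<alpha> i \<ge> 0" and c_nonneg: "c \<ge> 0"
    and m_pos: "m > 0" and m_le: "m \<le> rate_of R (\<Union>\<S>)"
    and rate_pos: "\<And>S. S \<in> \<S> \<Longrightarrow> rate_of R S > 0"
    and le_M: "\<And>S. S \<in> \<S> \<Longrightarrow> rate_of R S \<le> M"
    and spread: "M * (sum \<alpha> (\<Union>\<S>) + c) \<le> m * (sum \<alpha> (\<Union>\<S>) + real (card \<S>) * c)"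
    and ne: "\<S> \<noteq> {}"
  shows "multicast_cost R \<alpha> c (\<Union>\<S>) \<le> (\<Sum>S\<in>\<S>. multicast_cost R \<alpha> c S)"
proof -
  define A where "A = sum \<alpha> (\<Union>\<S>)"
  have A_nonneg: "A \<ge> 0" unfolding A_def using \<alpha>_nonneg by (intro sum_nonneg) auto
  have M_pos: "M > 0" using ne rate_pos le_M by (meson all_not_in_conv less_le_trans)
  have A_split: "A = (\<Sum>S\<in>\<S>. sum \<alpha> S)"
    unfolding A_def using fin_mem disj by (simp add: sum.Union_disjoint_sets)
  have "multicast_cost R \<alpha> c (\<Union>\<S>) \<le> (A + c) / m"
    unfolding multicast_cost_def A_def[symmetric]
    using m_le m_pos A_nonneg c_nonneg by (intro divide_left_mono) auto
  also have "\<dots> \<le> (A + real (card \<S>) * c) / M"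
    using spread m_pos M_pos unfolding A_def[symmetric] by (simp add: field_simps)
  also have "\<dots> = (\<Sum>S\<in>\<S>. (sum \<alpha> S + c) / M)"
    by (simp only: A_split) (simp add: sum.distrib add_divide_distrib sum_divide_distrib)
  also have "\<dots> \<le> (\<Sum>S\<in>\<S>. multicast_cost R \<alpha> c S)"
    unfolding multicast_cost_def
  proof (rule sum_mono)
    fix S assume S: "S \<in> \<S>"
    have "sum \<alpha> S + c \<ge> 0" using S \<alpha>_nonneg c_nonneg by (intro add_nonneg_nonneg sum_nonneg) auto
    then show "(sum \<alpha> S + c) / M \<le> (sum \<alpha> S + c) / rate_of R S"
      using le_M[OF S] rate_pos[OF S] by (intro divide_left_mono) auto
  qed
  finally show ?thesis .
qed

lemma rate_spread_bound:
  fixes M m A amin amax n c :: real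
  assumes "m > 0" "M \<ge> 0" "amax * n + c > 0"
    and "M / m \<le> 2 * (amin + c) / (amax * n + c)"
    and "A \<le> amax * n" "2 * amin \<le> A"
  shows "M * (A + c) \<le> m * (A + 2 * c)"
proof -
  have "M * (A + c) \<le> M * (amax * n + c)"
    using assms(2,5) by (intro mult_left_mono) auto
  also have "\<dots> \<le> 2 * m * (amin + c)"
    using assms(1,3,4) by (simp add: field_simps)
  also have "\<dots> \<le> m * (A + 2 * c)"
    using assms(1,6) by (simp add: algebra_simps)
  finally show ?thesis .
qed

lemma multicast_cost_Union_le:
  assumes fin: "finite \<S>" and ne: "\<S> \<noteq> {}" and disj: "disjoint \<S>"
    and ne_mem: "\<And>S. S \<in> \<S> \<Longrightarrow> S \<noteq> {}"
    and sub: "\<Union>\<S> \<subseteq> B" and fin_B: "finite B"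
    and R_pos: "\<And>i. i \<in> B \<Longrightarrow> R i > 0"
    and amin_nonneg: "amin \<ge> 0"
    and \<alpha>_bounds: "\<And>i. i \<in> B \<Longrightarrow> amin \<le> \<alpha> i \<and> \<alpha> i \<le> amax"
    and c_pos: "c > 0"
    and spread: "Max (R ` B) / Min (R ` B) \<le> 2 * (amin + c) / (amax * real (card B) + c)"
  shows "multicast_cost R \<alpha> c (\<Union>\<S>) \<le> (\<Sum>S\<in>\<S>. multicast_cost R \<alpha> c S)"
proof (cases "card \<S> = 1")
  case True
  then obtain S where "\<S> = {S}" by (rule card_1_singletonE)
  then show ?thesis by simp
next
  case False
  moreover have "card \<S> \<noteq> 0" using fin ne by simp
  ultimately have two_le: "2 \<le> card \<S>" by linarith
  define T where "T = \<Union>\<S>"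
  define A where "A = sum \<alpha> T"
  have fin_mem: "finite S" if "S \<in> \<S>" for S
    using that sub by (intro finite_subset[OF _ fin_B]) blast
  have T_ne: "T \<noteq> {}" unfolding T_def using ne ne_mem by blast
  have B_ne: "B \<noteq> {}" using sub T_ne T_def by blast
  have \<alpha>_T: "amin \<le> \<alpha> i \<and> \<alpha> i \<le> amax" if "i \<in> T" for i
    using that \<alpha>_bounds sub unfolding T_def by blast
  have "2 \<le> card T"
    using two_le card_le_card_Union_disjoint[OF disj ne_mem fin_mem] unfolding T_def by linarith
  then have "2 * amin \<le> real (card T) * amin" using amin_nonneg by (intro mult_right_mono) auto
  also have "\<dots> = (\<Sum>i\<in>T. amin)" by simp
  also have "\<dots> \<le> A" unfolding A_def using \<alpha>_T by (intro sum_mono) blast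
  finally have A_lower: "2 * amin \<le> A" .
  have amax_nonneg: "amax \<ge> 0" using \<alpha>_bounds B_ne amin_nonneg by fastforce
  have "A \<le> (\<Sum>i\<in>T. amax)" unfolding A_def using \<alpha>_T by (intro sum_mono) blast
  also have "\<dots> = amax * real (card T)" by simp
  also have "\<dots> \<le> amax * real (card B)"
    using card_mono[OF fin_B sub] amax_nonneg unfolding T_def by (intro mult_left_mono) auto
  finally have A_upper: "A \<le> amax * real (card B)" .
  define M where "M = Max (R ` B)"
  define m where "m = Min (R ` B)"
  have m_pos: "m > 0" using rate_of_pos[OF fin_B B_ne R_pos] unfolding rate_of_def m_def .
  have m_le: "m \<le> rate_of R T"
    using rate_of_antimono[OF fin_B T_ne] sub unfolding T_def m_def rate_of_def by simp
  have rate_pos: "0 < rate_of R S" if "S \<in> \<S>" for S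
    using that ne_mem sub fin_mem R_pos by (intro rate_of_pos) auto
  have le_M: "rate_of R S \<le> M" if "S \<in> \<S>" for S
    unfolding M_def using that ne_mem sub fin_B by (intro rate_of_le_Max) auto
  have M_nonneg: "M \<ge> 0" using ne rate_pos le_M by (meson all_not_in_conv less_le_trans less_imp_le)
  have "amax * real (card B) + c > 0" using A_upper A_lower amin_nonneg c_pos by linarith
  from rate_spread_bound[OF m_pos M_nonneg this spread[folded M_def m_def] A_upper A_lower]
  have "M * (A + c) \<le> m * (A + 2 * c)" .
  also have "\<dots> \<le> m * (A + real (card \<S>) * c)"
    using two_le c_pos m_pos by (intro mult_left_mono) auto
  finally have "M * (A + c) \<le> m * (A + real (card \<S>) * c)" .
  moreover have "\<alpha> i \<ge> 0" if "i \<in> \<Union>\<S>" for i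
    using that \<alpha>_T amin_nonneg unfolding T_def by force
  ultimately show ?thesis
    using multicast_cost_Union_le_of_rate_bounds[OF disj fin_mem _ _ m_pos _ rate_pos le_M _ ne]
      m_le c_pos unfolding A_def T_def by simp
qed

theorem lemma2:
  fixes N :: "'u set" and U R PRx :: "'u \<Rightarrow> real"
    and PTx X a b w :: real
    and P :: "'u set set" and \<S> :: "'u set set"
  assumes finN: "finite N" and neN: "N \<noteq> {}"
    and X_pos: "X > 0" and a_pos: "a > 0" and b_pos: "b > 0" and w_pos: "w > 0"
    and PTx_pos: "PTx > 0"
    and R_pos: "\<And>i. i \<in> N \<Longrightarrow> R i > 0"
    and PRx_pos: "\<And>i. i \<in> N \<Longrightarrow> PRx i > 0"
    and part: "partition_on N P"
    and cond: "\<And>Pj. Pj \<in> P \<Longrightarrow>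
        Max (R ` Pj) / Min (R ` Pj)
          \<le> 2 * (Min ((\<lambda>i. a * PRx i * X) ` N) + b * PTx * X + w * X)
             / (Max ((\<lambda>i. a * PRx i * X) ` N) * real (card Pj) + b * PTx * X + w * X)"
    and S_fin: "finite \<S>" and S_ne: "\<S> \<noteq> {}"
    and S_disj: "disjoint \<S>"
    and S_mem_ne: "\<And>S. S \<in> \<S> \<Longrightarrow> S \<noteq> {}"
    and S_compat: "\<exists>Pj\<in>P. \<Union>\<S> \<subseteq> Pj"
  shows "mc_value U R PRx PTx X a b w (\<Union>\<S>)
           \<ge> (\<Sum>S\<in>\<S>. mc_value U R PRx PTx X a b w S)"
proof -
  define \<alpha> where "\<alpha> i = a * PRx i * X" for i
  define c where "c = b * PTx * X + w * X"
  obtain Pj where Pj: "Pj \<in> P" "\<Union>\<S> \<subseteq> Pj" using S_compat by blast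
  have Pj_N: "Pj \<subseteq> N" using part Pj(1) by (auto simp: partition_on_def)
  have fin_Pj: "finite Pj" using finite_subset[OF Pj_N finN] .
  have fin_mem: "\<forall>S\<in>\<S>. finite S" using Pj(2) by (auto intro: finite_subset[OF _ fin_Pj])
  have \<alpha>_pos: "\<alpha> i > 0" if "i \<in> N" for i
    unfolding \<alpha>_def using a_pos PRx_pos[OF that] X_pos by simp
  have "multicast_cost R \<alpha> c (\<Union>\<S>) \<le> (\<Sum>S\<in>\<S>. multicast_cost R \<alpha> c S)"
  proof (rule multicast_cost_Union_le[OF S_fin S_ne S_disj S_mem_ne Pj(2) fin_Pj])
    show "0 \<le> Min (\<alpha> ` N)" using finN neN \<alpha>_pos by (simp add: less_imp_le)
    show "Min (\<alpha> ` N) \<le> \<alpha> i \<and> \<alpha> i \<le> Max (\<alpha> ` N)" if "i \<in> Pj" for i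
      using that Pj_N finN by auto
    show "c > 0" unfolding c_def using b_pos PTx_pos w_pos X_pos by (simp add: add_pos_pos)
    show "Max (R ` Pj) / Min (R ` Pj)
        \<le> 2 * (Min (\<alpha> ` N) + c) / (Max (\<alpha> ` N) * real (card Pj) + c)"
      using cond[OF Pj(1)] unfolding \<alpha>_def c_def by (simp add: add.assoc)
  qed (use R_pos Pj_N in auto)
  moreover have "sum U (\<Union>\<S>) = (\<Sum>S\<in>\<S>. sum U S)"
    using sum.Union_disjoint_sets[OF fin_mem S_disj] by simp
  ultimately show ?thesis
    unfolding mc_value_eq_sum_minus_cost \<alpha>_def[symmetric] c_def[symmetric]
    by (simp add: sum_subtractf)
qed

end
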